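(* Let $m\geq 1$, $n\geq 3$, and let $i,j\in V$. There exists a walk of length $2n-1$ from $i$ to $j$ in $D^m_n$ if and only if there exists a walk of length $n-1$ from $i$ to $j$ in $D^m_n$. In such cases, there are exactly $m$ distinct walks of length $2n-1$ from $i$ to $j$ in $D^m_n$.
   Context: For integers $m\geq 1$, $n\geq 3$, the oriented Dutch windmill graph $D^m_n$ is the directed graph with vertex set $V=\{1,2,\ldots,m(n-1)+1\}$ whose directed edges $(a,b)$ are exactly: $(1,(k-1)(n-1)+2)$ for $k\in\{1,\ldots,m\}$; $((k-1)(n-1)+i,(k-1)(n-1)+i+1)$ for $k\in\{1,\ldots,m\}$ and $i\in\{2,\ldots,n-1\}$; and $((k-1)(n-1)+n,1)$ for $k\in\{1,\ldots,m\}$. A walk is a sequence of vertices $\langle v_1,\ldots,v_r\rangle$ in which each $(v_t,v_{t+1})$ is an edge; its length is $r-1$; walks are distinct when they are distinct sequences. *)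

theory Defs
  imports Main
begin

definition dw_verts :: "nat \<Rightarrow> nat \<Rightarrow> nat set" where
  "dw_verts m n = {1 .. m * (n - 1) + 1}"

definition dw_edge :: "nat \<Rightarrow> nat \<Rightarrow> nat \<Rightarrow> nat \<Rightarrow> bool" where
  "dw_edge m n a b \<longleftrightarrow>
     (\<exists>k\<in>{1..m}. a = 1 \<and> b = (k - 1) * (n - 1) + 2)
   \<or> (\<exists>k\<in>{1..m}. \<exists>i\<in>{2..n - 1}. a = (k - 1) * (n - 1) + i \<and> b = (k - 1) * (n - 1) + i + 1)
   \<or> (\<exists>k\<in>{1..m}. a = (k - 1) * (n - 1) + n \<and> b = 1)"

definition dw_walk :: "nat \<Rightarrow> nat \<Rightarrow> nat list \<Rightarrow> bool" where
  "dw_walk m n w \<longleftrightarrow> w \<noteq> [] \<and> set w \<subseteq> dw_verts m n \<and>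
     (\<forall>t. Suc t < length w \<longrightarrow> dw_edge m n (w ! t) (w ! Suc t))"

definition dw_walks :: "nat \<Rightarrow> nat \<Rightarrow> nat \<Rightarrow> nat \<Rightarrow> nat \<Rightarrow> nat list set" where
  "dw_walks m n r i j = {w. dw_walk m n w \<and> length w = r + 1 \<and> hd w = i \<and> last w = j}"

end

theory Submission
  imports Defs
begin

(* D^m_n is m directed n-cycles (blades) glued at the hub 1.  Measured by its position on
   its blade, every edge advances a vertex by one modulo n, so a walk of length L from i to
   j exists only if pos j = pos i + L (mod n); as 2n - 1 = n - 1 (mod n), the two existence
   questions coincide.  A walk of length 2n - 1 meets the hub exactly twice, n steps apart:
   before the first and after the second visit it is forced, in between it runs once around
   a freely chosen blade, which gives exactly m walks. *)

(* Blade c < m is the cycle 1 \<rightarrow> c(n-1)+2 \<rightarrow> ... \<rightarrow> c(n-1)+n \<rightarrow> 1; its vertex at position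
   q < n is blade_vertex n c q, the hub having position 0 on every blade. *)
definition blade_vertex :: "nat \<Rightarrow> nat \<Rightarrow> nat \<Rightarrow> nat" where
  "blade_vertex n c q = (if q = 0 then 1 else c * (n - 1) + 1 + q)"

definition dw_pos :: "nat \<Rightarrow> nat \<Rightarrow> nat" where
  "dw_pos n v = (if v = 1 then 0 else (v - 2) mod (n - 1) + 1)"

(* junk for the hub, whose position 0 makes blade_vertex ignore the blade *)
definition dw_blade :: "nat \<Rightarrow> nat \<Rightarrow> nat" where
  "dw_blade n v = (v - 2) div (n - 1)"

lemma blade_vertex_0 [simp]: "blade_vertex n c 0 = 1"
  by (simp add: blade_vertex_def)

lemma dw_pos_eq_0_iff: "dw_pos n v = 0 \<longleftrightarrow> v = 1"
  by (simp add: dw_pos_def)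

lemma dw_pos_lt:
  assumes "n \<ge> 2"
  shows "dw_pos n v < n"
proof -
  have "(v - 2) mod (n - 1) < n - 1"
    using assms by simp
  then have "Suc ((v - 2) mod (n - 1)) < n"
    by linarith
  then show ?thesis
    by (simp add: dw_pos_def)
qed

lemma blade_vertex_Suc_minus_2: "blade_vertex (Suc N) c (Suc r) - 2 = c * N + r"
  by (simp add: blade_vertex_def)

lemma dw_pos_blade_vertex:
  assumes "q < n"
  shows "dw_pos n (blade_vertex n c q) = q"
proof (cases q)
  case (Suc r)
  with assms obtain N where "n = Suc N" "r < N"
    by (cases n) auto
  with Suc show ?thesis
    by (simp add: dw_pos_def blade_vertex_Suc_minus_2) (simp add: blade_vertex_def)
qed (simp add: dw_pos_def)

lemma dw_blade_blade_vertex: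
  assumes "0 < q" "q < n"
  shows "dw_blade n (blade_vertex n c q) = c"
proof -
  obtain N r where "n = Suc N" "q = Suc r" "r < N"
    using assms by (cases n; cases q) auto
  then show ?thesis
    by (simp add: dw_blade_def blade_vertex_Suc_minus_2)
qed

lemma blade_vertex_dw_blade_dw_pos:
  assumes "v \<in> dw_verts m n"
  shows "blade_vertex n (dw_blade n v) (dw_pos n v) = v"
proof (cases "v = 1")
  case False
  with assms have "v \<ge> 2"
    by (auto simp: dw_verts_def)
  moreover have "(v - 2) div (n - 1) * (n - 1) + (v - 2) mod (n - 1) = v - 2"
    by (rule div_mult_mod_eq)
  ultimately show ?thesis
    using False by (simp add: blade_vertex_def dw_blade_def dw_pos_def)
qed (simp add: dw_pos_def)

lemma dw_blade_lt:
  assumes "v \<in> dw_verts m n" "m \<ge> 1" "n \<ge> 2"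
  shows "dw_blade n v < m"
proof -
  have "m * (n - 1) \<ge> 1"
    using assms(2,3) by simp
  moreover have "v \<le> m * (n - 1) + 1"
    using assms(1) by (simp add: dw_verts_def)
  ultimately have "v - 2 < m * (n - 1)"
    by linarith
  then show ?thesis
    by (simp add: dw_blade_def less_mult_imp_div_less)
qed

lemma blade_vertex_in_dw_verts:
  assumes "c < m" "q < n"
  shows "blade_vertex n c q \<in> dw_verts m n"
proof (cases "q = 0")
  case False
  have "c * (n - 1) + (n - 1) \<le> m * (n - 1)"
    using assms(1) mult_le_mono1[of "Suc c" m "n - 1"] by simp
  with assms False show ?thesis
    by (simp add: blade_vertex_def dw_verts_def)
qed (simp add: dw_verts_def)

lemma dw_edge_iff:
  assumes "n \<ge> 2"
  shows "dw_edge m n a b \<longleftrightarrow>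
    (\<exists>c<m. \<exists>q<n. a = blade_vertex n c q \<and> b = blade_vertex n c (Suc q mod n))"
proof
  assume "dw_edge m n a b"
  then show "\<exists>c<m. \<exists>q<n. a = blade_vertex n c q \<and> b = blade_vertex n c (Suc q mod n)"
    unfolding dw_edge_def
  proof (elim disjE bexE conjE)
    fix k assume "k \<in> {1..m}" "a = 1" "b = (k - 1) * (n - 1) + 2"
    then show ?thesis
      using assms by (intro exI[of _ "k - 1"] conjI exI[of _ 0]) (auto simp: blade_vertex_def)
  next
    fix k i assume "k \<in> {1..m}" "i \<in> {2..n - 1}"
      "a = (k - 1) * (n - 1) + i" "b = (k - 1) * (n - 1) + i + 1"
    then show ?thesis
      by (intro exI[of _ "k - 1"] conjI exI[of _ "i - 1"]) (auto simp: blade_vertex_def)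
  next
    fix k assume "k \<in> {1..m}" "a = (k - 1) * (n - 1) + n" "b = 1"
    then show ?thesis
      using assms by (intro exI[of _ "k - 1"] conjI exI[of _ "n - 1"]) (auto simp: blade_vertex_def)
  qed
next
  assume "\<exists>c<m. \<exists>q<n. a = blade_vertex n c q \<and> b = blade_vertex n c (Suc q mod n)"
  then obtain c q where c: "c < m" and q: "q < n"
    and ab: "a = blade_vertex n c q" "b = blade_vertex n c (Suc q mod n)"
    by blast
  consider "q = 0" | "0 < q" "Suc q < n" | "Suc q = n"
    using q by linarith
  then show "dw_edge m n a b"
  proof cases
    case 1
    then show ?thesis
      unfolding dw_edge_def using ab c assms
      by (intro disjI1 bexI[of _ "Suc c"]) (auto simp: blade_vertex_def)
  next
    case 2
    then show ?thesis
      unfolding dw_edge_def using ab c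
      by (intro disjI2 disjI1 bexI[of _ "Suc c"] bexI[of _ "Suc q"]) (auto simp: blade_vertex_def)
  next
    case 3
    then show ?thesis
      unfolding dw_edge_def using ab c
      by (intro disjI2 bexI[of _ "Suc c"]) (auto simp: blade_vertex_def)
  qed
qed

lemma dw_edge_blade_vertex:
  "n \<ge> 2 \<Longrightarrow> c < m \<Longrightarrow> q < n \<Longrightarrow>
    dw_edge m n (blade_vertex n c q) (blade_vertex n c (Suc q mod n))"
  by (auto simp: dw_edge_iff)

lemma dw_edge_dw_pos:
  "n \<ge> 2 \<Longrightarrow> dw_edge m n a b \<Longrightarrow> dw_pos n b = Suc (dw_pos n a) mod n"
  by (auto simp: dw_edge_iff dw_pos_blade_vertex)

lemma dw_edge_dw_blade:
  assumes "n \<ge> 2" "dw_edge m n a b" "a \<noteq> 1" "b \<noteq> 1"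
  shows "dw_blade n b = dw_blade n a"
proof -
  obtain c q where q: "q < n" and ab: "a = blade_vertex n c q" "b = blade_vertex n c (Suc q mod n)"
    using assms(1,2) by (auto simp: dw_edge_iff)
  have "q \<noteq> 0" "Suc q mod n \<noteq> 0"
    using ab assms(3,4) by (metis blade_vertex_0)+
  then have "0 < q" "Suc q < n"
    using q by (auto simp: mod_Suc split: if_splits)
  with ab show ?thesis
    by (simp add: dw_blade_blade_vertex)
qed

lemma dw_walks_length: "w \<in> dw_walks m n L i j \<Longrightarrow> length w = Suc L"
  by (simp add: dw_walks_def)

lemma dw_walks_nth_0: "w \<in> dw_walks m n L i j \<Longrightarrow> w ! 0 = i"
  by (auto simp: dw_walks_def dw_walk_def hd_conv_nth)

lemma dw_walks_nth_last: "w \<in> dw_walks m n L i j \<Longrightarrow> w ! L = j"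
  by (auto simp: dw_walks_def dw_walk_def last_conv_nth)

lemma dw_walks_nth_in_dw_verts:
  "w \<in> dw_walks m n L i j \<Longrightarrow> t \<le> L \<Longrightarrow> w ! t \<in> dw_verts m n"
  by (auto simp: dw_walks_def dw_walk_def)

lemma dw_walks_dw_edge:
  "w \<in> dw_walks m n L i j \<Longrightarrow> t < L \<Longrightarrow> dw_edge m n (w ! t) (w ! Suc t)"
  by (simp add: dw_walks_def dw_walk_def)

lemma dw_walks_dw_pos:
  assumes "w \<in> dw_walks m n L i j" "n \<ge> 2" "t \<le> L"
  shows "dw_pos n (w ! t) = (dw_pos n i + t) mod n"
  using assms(3)
proof (induction t)
  case 0
  then show ?case
    using assms(1,2) by (simp add: dw_walks_nth_0 dw_pos_lt)
next
  case (Suc t)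
  then have "dw_pos n (w ! Suc t) = Suc (dw_pos n (w ! t)) mod n"
    using dw_edge_dw_pos[OF assms(2) dw_walks_dw_edge[OF assms(1)]] by simp
  with Suc show ?case
    by (simp add: mod_Suc_eq)
qed

lemma dw_walks_dw_pos_last:
  "w \<in> dw_walks m n L i j \<Longrightarrow> n \<ge> 2 \<Longrightarrow> dw_pos n j = (dw_pos n i + L) mod n"
  using dw_walks_dw_pos[of w m n L i j L] by (simp add: dw_walks_nth_last)

lemma dw_walks_nth_eq_blade_vertex:
  assumes "w \<in> dw_walks m n L i j" "n \<ge> 2" "t \<le> L"
  shows "w ! t = blade_vertex n (dw_blade n (w ! t)) ((dw_pos n i + t) mod n)"
  using blade_vertex_dw_blade_dw_pos[OF dw_walks_nth_in_dw_verts[OF assms(1,3)]]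
  by (simp add: dw_walks_dw_pos[OF assms])

lemma mod_ne_0_between:
  fixes x z n :: nat
  assumes "z mod n = 0" "z < x" "x < z + n"
  shows "x mod n \<noteq> 0"
proof -
  have "x mod n = (x - z) mod n"
    using assms(1,2) by (metis add_diff_inverse_nat mod_add_left_eq add_0 less_imp_not_less)
  with assms(2,3) show ?thesis
    by simp
qed

(* z is a hub visit (in shifted time) and steps s..u come before the next one *)
lemma dw_walks_dw_blade_eq:
  assumes "w \<in> dw_walks m n L i j" "n \<ge> 2" "s \<le> u" "u \<le> L"
    and "z mod n = 0" "z < dw_pos n i + s" "dw_pos n i + u < z + n"
  shows "dw_blade n (w ! u) = dw_blade n (w ! s)"
  using assms(3,4,7)
proof (induction u)
  case (Suc u)
  show ?case
  proof (cases "s = Suc u")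
    case False
    have "w ! t \<noteq> 1" if "s \<le> t" "t \<le> Suc u" for t
    proof -
      have "z < dw_pos n i + t" "dw_pos n i + t < z + n"
        using that Suc.prems assms(6) by linarith+
      then have "(dw_pos n i + t) mod n \<noteq> 0"
        by (rule mod_ne_0_between[OF assms(5)])
      then have "dw_pos n (w ! t) \<noteq> 0"
        using dw_walks_dw_pos[OF assms(1,2)] that Suc.prems by simp
      then show ?thesis
        by (simp add: dw_pos_eq_0_iff)
    qed
    with False Suc show ?thesis
      using dw_edge_dw_blade[OF assms(2) dw_walks_dw_edge[OF assms(1)], of u] by simp
  qed simp
qed simp

definition hub_time :: "nat \<Rightarrow> nat \<Rightarrow> nat" where
  "hub_time n i = (n - dw_pos n i) mod n"

lemma dw_pos_add_hub_time:
  assumes "n \<ge> 2"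
  shows "dw_pos n i + hub_time n i = (if i = 1 then 0 else n)"
proof (cases "i = 1")
  case False
  then have "0 < dw_pos n i"
    by (simp add: dw_pos_def)
  with dw_pos_lt[OF assms, of i] False show ?thesis
    by (simp add: hub_time_def)
qed (simp add: hub_time_def dw_pos_def)

lemma dw_pos_add_hub_time_mod:
  assumes "n \<ge> 2"
  shows "(dw_pos n i + hub_time n i) mod n = 0" "(dw_pos n i + (hub_time n i + n)) mod n = 0"
  using dw_pos_add_hub_time[OF assms, of i] by (simp_all flip: add.assoc)

lemma dw_walk_map_blade_vertex:
  assumes "n \<ge> 2" "\<And>t. b t < m" "\<And>t. (p + Suc t) mod n \<noteq> 0 \<Longrightarrow> b (Suc t) = b t"
  shows "dw_walk m n (map (\<lambda>t. blade_vertex n (b t) ((p + t) mod n)) [0..<Suc L])"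
proof -
  have "dw_edge m n (blade_vertex n (b t) ((p + t) mod n))
      (blade_vertex n (b (Suc t)) ((p + Suc t) mod n))" for t
  proof -
    have "blade_vertex n (b (Suc t)) ((p + Suc t) mod n) = blade_vertex n (b t) ((p + Suc t) mod n)"
      using assms(3)[of t] by (cases "(p + Suc t) mod n = 0") simp_all
    moreover have "(p + Suc t) mod n = Suc ((p + t) mod n) mod n"
      by (simp add: mod_Suc_eq)
    ultimately show ?thesis
      using dw_edge_blade_vertex[OF assms(1,2), of "(p + t) mod n"] assms(1) by simp
  qed
  moreover have "blade_vertex n (b t) ((p + t) mod n) \<in> dw_verts m n" for t
    using assms(1,2) by (simp add: blade_vertex_in_dw_verts)
  ultimately show ?thesis
    unfolding dw_walk_def by (auto simp del: upt_Suc)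
qed

(* A walk from i visits the hub exactly at the times hub_time n i + a * n; the walk
   through_blade stays on the blade of i before the first visit, runs once around blade k
   up to the second one, and stays on the blade of j afterwards. *)
definition blade_schedule :: "nat \<Rightarrow> nat \<Rightarrow> nat \<Rightarrow> nat \<Rightarrow> nat \<Rightarrow> nat" where
  "blade_schedule n i j k t =
    (if t < hub_time n i then dw_blade n i else if t < hub_time n i + n then k else dw_blade n j)"

definition through_blade :: "nat \<Rightarrow> nat \<Rightarrow> nat \<Rightarrow> nat \<Rightarrow> nat \<Rightarrow> nat list" where
  "through_blade n i j k L =
    map (\<lambda>t. blade_vertex n (blade_schedule n i j k t) ((dw_pos n i + t) mod n)) [0..<Suc L]"

lemma blade_schedule_Suc:
  assumes "n \<ge> 2" "(dw_pos n i + Suc t) mod n \<noteq> 0"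
  shows "blade_schedule n i j k (Suc t) = blade_schedule n i j k t"
proof -
  have "Suc t \<noteq> hub_time n i" "Suc t \<noteq> hub_time n i + n"
    using assms(2) dw_pos_add_hub_time_mod[OF assms(1)] by metis+
  then show ?thesis
    by (auto simp: blade_schedule_def)
qed

lemma through_blade_in_dw_walks:
  assumes "m \<ge> 1" "n \<ge> 2" "i \<in> dw_verts m n" "j \<in> dw_verts m n" "k < m"
    and "dw_pos n j = (dw_pos n i + L) mod n" "hub_time n i \<le> L"
    and "L < hub_time n i + n \<Longrightarrow> k = dw_blade n j"
  shows "through_blade n i j k L \<in> dw_walks m n L i j"
proof -
  have "dw_walk m n (through_blade n i j k L)"
    unfolding through_blade_def
  proof (rule dw_walk_map_blade_vertex[OF assms(2)])
    show "blade_schedule n i j k t < m" for t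
      using dw_blade_lt[OF assms(3,1,2)] dw_blade_lt[OF assms(4,1,2)] assms(5)
      by (simp add: blade_schedule_def)
  qed (rule blade_schedule_Suc[OF assms(2)])
  moreover have "hd (through_blade n i j k L) = i"
  proof (cases "i = 1")
    case False
    have pos_i: "dw_pos n i < n"
      using dw_pos_lt[OF assms(2)] .
    moreover have "dw_pos n i + hub_time n i = n"
      using dw_pos_add_hub_time[OF assms(2), of i] False by simp
    ultimately have "0 < hub_time n i"
      by linarith
    with pos_i show ?thesis
      using blade_vertex_dw_blade_dw_pos[OF assms(3)]
      by (simp add: through_blade_def blade_schedule_def hd_map del: upt_Suc)
  qed (simp add: through_blade_def hd_map dw_pos_def del: upt_Suc)
  moreover have "last (through_blade n i j k L) = j"
  proof (cases "j = 1")
    case False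
    then have "blade_schedule n i j k L = dw_blade n j"
      using assms(7,8) by (auto simp: blade_schedule_def)
    then show ?thesis
      using blade_vertex_dw_blade_dw_pos[OF assms(4)]
      by (simp add: through_blade_def last_map assms(6) del: upt_Suc)
  qed (use assms(6) in \<open>simp add: through_blade_def last_map dw_pos_def del: upt_Suc\<close>)
  ultimately show ?thesis
    by (simp add: dw_walks_def through_blade_def)
qed

lemma nth_through_blade:
  "t \<le> L \<Longrightarrow>
    through_blade n i j k L ! t = blade_vertex n (blade_schedule n i j k t) ((dw_pos n i + t) mod n)"
  by (simp add: through_blade_def nth_map_upt del: upt_Suc)

lemma dw_blade_nth_through_blade:
  assumes "n \<ge> 2" "hub_time n i < L"
  shows "dw_blade n (through_blade n i j k L ! Suc (hub_time n i)) = k"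
proof -
  have "(dw_pos n i + Suc (hub_time n i)) mod n = 1"
    using dw_pos_add_hub_time_mod(1)[OF assms(1), of i] assms(1) by (simp add: mod_Suc)
  with assms show ?thesis
    by (simp add: nth_through_blade blade_schedule_def dw_blade_blade_vertex)
qed

lemma dw_walks_eq_through_blade:
  assumes "n \<ge> 2" "w \<in> dw_walks m n L i j"
    and "hub_time n i + n \<le> L" "L < hub_time n i + 2 * n"
  shows "w = through_blade n i j (dw_blade n (w ! Suc (hub_time n i))) L"
proof -
  define z where "z = hub_time n i"
  define p where "p = dw_pos n i"
  define k where "k = dw_blade n (w ! Suc z)"
  have z: "(p + z) mod n = 0" "(p + (z + n)) mod n = 0"
    using dw_pos_add_hub_time_mod[OF assms(1)] by (simp_all add: p_def z_def)
  have blade: "dw_blade n (w ! t) = blade_schedule n i j k t"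
    if t: "t \<le> L" "(p + t) mod n \<noteq> 0" for t
  proof -
    have "t \<noteq> z" "t \<noteq> z + n"
      using t(2) z by metis+
    then consider "t < z" | "z < t" "t < z + n" | "z + n < t"
      by linarith
    then show ?thesis
    proof cases
      case 1
      then have "p + z = n" "0 < p"
        using dw_pos_add_hub_time[OF assms(1), of i]
        by (auto simp: p_def z_def dw_pos_def split: if_splits)
      then have "dw_blade n (w ! t) = dw_blade n (w ! 0)"
        using 1 by (intro dw_walks_dw_blade_eq[OF assms(2,1), of 0 t 0]) (auto simp: p_def t(1))
      with 1 show ?thesis
        by (simp add: blade_schedule_def z_def dw_walks_nth_0[OF assms(2)])
    next
      case 2
      then have "dw_blade n (w ! t) = dw_blade n (w ! Suc z)"
        using z t(1)
        by (intro dw_walks_dw_blade_eq[OF assms(2,1), of "Suc z" t "p + z"]) (auto simp: p_def)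
      with 2 show ?thesis
        by (simp add: blade_schedule_def z_def k_def)
    next
      case 3
      then have "dw_blade n (w ! L) = dw_blade n (w ! t)"
        using z t(1) assms(4)
        by (intro dw_walks_dw_blade_eq[OF assms(2,1), of t L "p + z + n"]) (auto simp: p_def z_def)
      with 3 show ?thesis
        by (simp add: blade_schedule_def z_def dw_walks_nth_last[OF assms(2)])
    qed
  qed
  have "w ! t = through_blade n i j k L ! t" if "t \<le> L" for t
    using dw_walks_nth_eq_blade_vertex[OF assms(2,1) that] blade[OF that]
    by (cases "(p + t) mod n = 0") (simp_all add: nth_through_blade that p_def z_def)
  then show ?thesis
    by (intro nth_equalityI) (auto simp: dw_walks_length[OF assms(2)] through_blade_def k_def z_def)
qed

lemma bij_betw_through_blade:
  assumes "m \<ge> 1" "n \<ge> 2" "i \<in> dw_verts m n" "j \<in> dw_verts m n"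
    and "dw_pos n j = (dw_pos n i + L) mod n"
    and "hub_time n i + n \<le> L" "L < hub_time n i + 2 * n"
  shows "bij_betw (\<lambda>k. through_blade n i j k L) {..<m} (dw_walks m n L i j)"
proof (rule bij_betw_imageI)
  show "inj_on (\<lambda>k. through_blade n i j k L) {..<m}"
    by (rule inj_on_inverseI[where g = "\<lambda>w. dw_blade n (w ! Suc (hub_time n i))"])
      (use assms(2,6) in \<open>simp add: dw_blade_nth_through_blade\<close>)
  have "w \<in> (\<lambda>k. through_blade n i j k L) ` {..<m}" if w: "w \<in> dw_walks m n L i j" for w
  proof -
    have "dw_blade n (w ! Suc (hub_time n i)) < m"
      using assms(1,2,6) by (intro dw_blade_lt dw_walks_nth_in_dw_verts[OF w]) auto
    then show ?thesis
      using dw_walks_eq_through_blade[OF assms(2) w assms(6,7)] by blast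
  qed
  then show "(\<lambda>k. through_blade n i j k L) ` {..<m} = dw_walks m n L i j"
    using through_blade_in_dw_walks[OF assms(1-4) _ assms(5)] assms(6) by fastforce
qed

lemma dw_walks_nonempty_iff:
  assumes "m \<ge> 1" "n \<ge> 2" "i \<in> dw_verts m n" "j \<in> dw_verts m n" "hub_time n i \<le> L"
  shows "dw_walks m n L i j \<noteq> {} \<longleftrightarrow> dw_pos n j = (dw_pos n i + L) mod n"
proof
  assume "dw_walks m n L i j \<noteq> {}"
  then show "dw_pos n j = (dw_pos n i + L) mod n"
    using dw_walks_dw_pos_last assms(2) by blast
next
  assume "dw_pos n j = (dw_pos n i + L) mod n"
  then have "through_blade n i j (dw_blade n j) L \<in> dw_walks m n L i j"
    using assms by (intro through_blade_in_dw_walks dw_blade_lt) auto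
  then show "dw_walks m n L i j \<noteq> {}"
    by blast
qed

lemma card_dw_walks:
  assumes "m \<ge> 1" "n \<ge> 2" "i \<in> dw_verts m n" "j \<in> dw_verts m n"
    and "dw_pos n j = (dw_pos n i + L) mod n"
    and "hub_time n i + n \<le> L" "L < hub_time n i + 2 * n"
  shows "card (dw_walks m n L i j) = m"
  using bij_betw_same_card[OF bij_betw_through_blade[OF assms]] by simp

theorem lemma2p4:
  fixes m n i j :: nat
  assumes "m \<ge> 1" and "n \<ge> 3"
    and "i \<in> dw_verts m n" and "j \<in> dw_verts m n"
  shows "(dw_walks m n (2 * n - 1) i j \<noteq> {} \<longleftrightarrow> dw_walks m n (n - 1) i j \<noteq> {})
         \<and> (dw_walks m n (2 * n - 1) i j \<noteq> {} \<longrightarrow> card (dw_walks m n (2 * n - 1) i j) = m)"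
proof -
  have n: "n \<ge> 2"
    using assms(2) by simp
  have z: "hub_time n i < n"
    using n by (simp add: hub_time_def)
  have "dw_pos n i + (2 * n - 1) = dw_pos n i + (n - 1) + n"
    using n by simp
  then have "(dw_pos n i + (2 * n - 1)) mod n = (dw_pos n i + (n - 1)) mod n"
    by (metis mod_add_self2)
  moreover have "dw_walks m n (n - 1) i j \<noteq> {} \<longleftrightarrow> dw_pos n j = (dw_pos n i + (n - 1)) mod n"
    using z by (intro dw_walks_nonempty_iff[OF assms(1) n assms(3,4)]) simp
  moreover have
    "dw_walks m n (2 * n - 1) i j \<noteq> {} \<longleftrightarrow> dw_pos n j = (dw_pos n i + (2 * n - 1)) mod n"
    using z by (intro dw_walks_nonempty_iff[OF assms(1) n assms(3,4)]) simp
  moreover have "card (dw_walks m n (2 * n - 1) i j) = m"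
    if "dw_pos n j = (dw_pos n i + (2 * n - 1)) mod n"
    using z by (intro card_dw_walks[OF assms(1) n assms(3,4) that]) simp_all
  ultimately show ?thesis
    by auto
qed

end
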